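(* Let $\Delta\ge\omega\ge u+1\ge2$ and $p\ge1$ be integers, let $H$ be a graph containing $K_u$ as a subgraph, and let $L=\mathrm{T}_\omega\big(\Delta+u\lfloor\frac{\Delta}{\omega-u}\rfloor\big)$. Then \[\mathcal{N}\Big(H,\Big\lfloor\frac{p}{k^u(L)}\Big\rfloor L\Big)\le\mathrm{ex}_u(p,H,\{K_u\vee I_{\Delta+1},K_{\omega+1}\}).\]
   Context: All graphs are finite and simple. $\mathcal{N}(H,G)$ is the number of (not necessarily induced) subgraphs of $G$ isomorphic to $H$; $k^u(G)=\mathcal{N}(K_u,G)$. $aL$ is the disjoint union of $a$ copies of $L$. $\mathrm{T}_r(n)$ is the Turán graph (complete $r$-partite on $n$ vertices with part sizes $\lfloor n/r\rfloor$ or $\lceil n/r\rceil$). $K_u\vee I_{\Delta+1}$ is the complete split graph: a $u$-clique, an independent set of $\Delta+1$ vertices, and all edges between them. $\mathrm{ex}_u(p,H,\mathcal{F})\in[0,\infty]$ is the supremum of $\mathcal{N}(H,G)$ over all graphs $G$ with $k^u(G)=p$ having no subgraph isomorphic to a member of $\mathcal{F}$. *)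

theory Defs
  imports Main "HOL-Library.Extended_Nat"
begin

type_synonym 'a graph = "'a set \<times> 'a set set"

definition verts :: "'a graph \<Rightarrow> 'a set" where "verts G = fst G"
definition edges :: "'a graph \<Rightarrow> 'a set set" where "edges G = snd G"

definition wf_graph :: "'a graph \<Rightarrow> bool" where
  "wf_graph G \<longleftrightarrow> finite (verts G) \<and>
     (\<forall>e\<in>edges G. \<exists>x y. x \<noteq> y \<and> e = {x, y} \<and> x \<in> verts G \<and> y \<in> verts G)"

definition subgraph :: "'a graph \<Rightarrow> 'a graph \<Rightarrow> bool" where
  "subgraph S G \<longleftrightarrow> wf_graph S \<and> verts S \<subseteq> verts G \<and> edges S \<subseteq> edges G"

definition iso :: "'a graph \<Rightarrow> 'b graph \<Rightarrow> bool" where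
  "iso G H \<longleftrightarrow> (\<exists>f. bij_betw f (verts G) (verts H) \<and>
     (\<forall>x\<in>verts G. \<forall>y\<in>verts G. {x, y} \<in> edges G \<longleftrightarrow> {f x, f y} \<in> edges H))"

definition count_sub :: "'b graph \<Rightarrow> 'a graph \<Rightarrow> nat" where
  "count_sub H G = card {S. subgraph S G \<and> iso S H}"

definition complete_graph :: "nat \<Rightarrow> nat graph" where
  "complete_graph n = ({0..<n}, {{i, j} | i j. i < n \<and> j < n \<and> i \<noteq> j})"

definition kcount :: "nat \<Rightarrow> 'a graph \<Rightarrow> nat" where
  "kcount u G = count_sub (complete_graph u) G"

text \<open>Turan graph T_r(n): vertex i lies in part (i mod r); parts have sizes floor/ceil of n/r.\<close>
definition turan_graph :: "nat \<Rightarrow> nat \<Rightarrow> nat graph" where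
  "turan_graph r n = ({0..<n}, {{i, j} | i j. i < n \<and> j < n \<and> i mod r \<noteq> j mod r})"

text \<open>Complete split graph K_u \<or> I_(d+1): vertices 0..<u form the clique,
  vertices u..<u+d+1 the independent set.\<close>
definition split_graph :: "nat \<Rightarrow> nat \<Rightarrow> nat graph" where
  "split_graph u d = ({0..<u + d + 1},
     {{i, j} | i j. i < u + d + 1 \<and> j < u + d + 1 \<and> i \<noteq> j \<and> (i < u \<or> j < u)})"

definition copies :: "nat \<Rightarrow> 'a graph \<Rightarrow> (nat \<times> 'a) graph" where
  "copies a L = ({0..<a} \<times> verts L,
     {{(k, x), (k, y)} | k x y. k < a \<and> {x, y} \<in> edges L})"

text \<open>Every finite graph is isomorphic to
  one on natural-number vertices, so ranging over nat graphs loses nothing.\<close>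
definition ex_u :: "nat \<Rightarrow> nat \<Rightarrow> 'b graph \<Rightarrow> 'c graph set \<Rightarrow> enat" where
  "ex_u u p H F = Sup {enat (count_sub H G) | G :: nat graph.
      wf_graph G \<and> kcount u G = p \<and> (\<forall>F0\<in>F. count_sub F0 G = 0)}"

end

theory Submission
  imports Defs "HOL-Library.Countable" "HOL-Library.Disjoint_Sets"
begin

text \<open>The graph \<open>G\<close> obtained from \<open>\<lfloor>p / k\<^sup>u(L)\<rfloor>\<close> copies of \<open>L\<close> by adding \<open>p mod k\<^sup>u(L)\<close>
  disjoint copies of \<open>K\<^sub>u\<close> has exactly \<open>p\<close> copies of \<open>K\<^sub>u\<close> and contains \<open>\<lfloor>p / k\<^sup>u(L)\<rfloor> L\<close>.
  Both forbidden graphs have a dominating vertex, so each of their copies in \<open>G\<close> lies inside a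
  single component; it therefore suffices that \<open>L\<close> and \<open>K\<^sub>u\<close> avoid them. For \<open>K\<^sub>u\<close> this is a
  matter of size. In \<open>L = T\<^sub>\<omega>(n)\<close>, \<open>n = \<Delta> + u q\<close>, \<open>q = \<lfloor>\<Delta> / (\<omega> - u)\<rfloor>\<close>, the clique of a copy of
  \<open>K\<^sub>u \<or> I\<^sub>\<Delta>\<^sub>+\<^sub>1\<close> meets \<open>u\<close> distinct parts, each of size at least \<open>q\<close>, and the \<open>\<Delta> + 1\<close> independent
  vertices must avoid all of them, although at most \<open>n - u q = \<Delta>\<close> vertices are left.\<close>

definition gmap :: "('a \<Rightarrow> 'b) \<Rightarrow> 'a graph \<Rightarrow> 'b graph" where
  "gmap f G = (f ` verts G, (\<lambda>e. f ` e) ` edges G)"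

lemma verts_gmap [simp]: "verts (gmap f G) = f ` verts G"
  by (simp add: gmap_def verts_def)

lemma edges_gmap [simp]: "edges (gmap f G) = (\<lambda>e. f ` e) ` edges G"
  by (simp add: gmap_def edges_def)

lemma verts_pair [simp]: "verts (V, E) = V"
  by (simp add: verts_def)

lemma edges_pair [simp]: "edges (V, E) = E"
  by (simp add: edges_def)

lemma graph_eqI: "verts A = verts B \<Longrightarrow> edges A = edges B \<Longrightarrow> A = B"
  by (simp add: verts_def edges_def prod_eq_iff)

lemma wf_graph_finite_verts: "wf_graph G \<Longrightarrow> finite (verts G)"
  unfolding wf_graph_def by blast

lemma wf_graph_edgeE:
  assumes "wf_graph G" "e \<in> edges G"
  obtains x y where "x \<noteq> y" "e = {x, y}" "x \<in> verts G" "y \<in> verts G"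
  using assms unfolding wf_graph_def by blast

lemma wf_graph_edge_subset: "wf_graph G \<Longrightarrow> e \<in> edges G \<Longrightarrow> e \<subseteq> verts G"
  by (erule wf_graph_edgeE) auto

lemma wf_graph_finite_edges: "wf_graph G \<Longrightarrow> finite (edges G)"
  by (rule finite_subset[of _ "Pow (verts G)"])
    (auto dest: wf_graph_edge_subset simp: wf_graph_finite_verts)

lemma wf_graph_intro:
  assumes "finite V" and "\<And>i j. P i j \<Longrightarrow> i \<noteq> j \<and> i \<in> V \<and> j \<in> V"
  shows "wf_graph (V, {{i, j} | i j. P i j})"
  using assms unfolding wf_graph_def by auto

lemma subgraphD:
  assumes "subgraph S G"
  shows "wf_graph S" "verts S \<subseteq> verts G" "edges S \<subseteq> edges G"
  using assms unfolding subgraph_def by simp_all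

lemma subgraph_trans_host:
  "subgraph S A \<Longrightarrow> verts A \<subseteq> verts B \<Longrightarrow> edges A \<subseteq> edges B \<Longrightarrow> subgraph S B"
  unfolding subgraph_def by blast

lemma finite_copies: "wf_graph G \<Longrightarrow> finite {S. subgraph S G \<and> iso S F}"
proof -
  assume w: "wf_graph G"
  have "{S. subgraph S G \<and> iso S F} \<subseteq> Pow (verts G) \<times> Pow (edges G)"
    by (auto simp: subgraph_def verts_def edges_def mem_Times_iff)
  then show ?thesis
    by (rule finite_subset) (simp add: w wf_graph_finite_verts wf_graph_finite_edges)
qed

lemma count_sub_mono:
  assumes "wf_graph B" "verts A \<subseteq> verts B" "edges A \<subseteq> edges B"
  shows "count_sub F A \<le> count_sub F B"
  unfolding count_sub_def
  using subgraph_trans_host[OF _ assms(2,3)]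
  by (intro card_mono[OF finite_copies[OF assms(1)]]) blast

lemma iso_refl: "iso G G"
  unfolding iso_def by (rule exI[of _ id]) simp

lemma iso_trans:
  assumes "iso A B" "iso B C"
  shows "iso A C"
proof -
  obtain f where f: "bij_betw f (verts A) (verts B)"
    and fe: "\<forall>x\<in>verts A. \<forall>y\<in>verts A. {x, y} \<in> edges A \<longleftrightarrow> {f x, f y} \<in> edges B"
    using assms(1) unfolding iso_def by blast
  obtain g where g: "bij_betw g (verts B) (verts C)"
    and ge: "\<forall>x\<in>verts B. \<forall>y\<in>verts B. {x, y} \<in> edges B \<longleftrightarrow> {g x, g y} \<in> edges C"
    using assms(2) unfolding iso_def by blast
  have "\<forall>x\<in>verts A. \<forall>y\<in>verts A. {x, y} \<in> edges A \<longleftrightarrow> {g (f x), g (f y)} \<in> edges C"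
    using fe ge bij_betwE[OF f] by blast
  with bij_betw_trans[OF f g] show ?thesis
    unfolding iso_def by (intro exI[of _ "g \<circ> f"]) simp
qed

lemma iso_sym:
  assumes "iso A B"
  shows "iso B A"
proof -
  obtain f where f: "bij_betw f (verts A) (verts B)"
    and fe: "\<forall>x\<in>verts A. \<forall>y\<in>verts A. {x, y} \<in> edges A \<longleftrightarrow> {f x, f y} \<in> edges B"
    using assms unfolding iso_def by blast
  let ?h = "inv_into (verts A) f"
  have h: "bij_betw ?h (verts B) (verts A)"
    using f by (rule bij_betw_inv_into)
  have "{x, y} \<in> edges B \<longleftrightarrow> {?h x, ?h y} \<in> edges A" if "x \<in> verts B" "y \<in> verts B" for x y
    using fe bij_betwE[OF h] that bij_betw_inv_into_right[OF f] by metis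
  with h show ?thesis
    unfolding iso_def by blast
qed

lemma wf_graph_gmap:
  assumes "inj_on f (verts G)" "wf_graph G"
  shows "wf_graph (gmap f G)"
  unfolding wf_graph_def
proof (intro conjI ballI)
  show "finite (verts (gmap f G))"
    using assms(2) by (simp add: wf_graph_finite_verts)
  fix e' assume "e' \<in> edges (gmap f G)"
  then obtain e where e: "e \<in> edges G" "e' = f ` e" by auto
  obtain x y where "x \<noteq> y" "e = {x, y}" "x \<in> verts G" "y \<in> verts G"
    using wf_graph_edgeE[OF assms(2) e(1)] .
  with e(2) inj_on_contraD[OF assms(1)]
  show "\<exists>x y. x \<noteq> y \<and> e' = {x, y} \<and> x \<in> verts (gmap f G) \<and> y \<in> verts (gmap f G)"
    by auto
qed

lemma iso_gmap:
  assumes i: "inj_on f (verts G)" and w: "wf_graph G"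
  shows "iso G (gmap f G)"
  unfolding iso_def
proof (intro exI[of _ f] conjI ballI)
  show "bij_betw f (verts G) (verts (gmap f G))"
    using i by (simp add: bij_betw_def)
  fix x y assume xy: "x \<in> verts G" "y \<in> verts G"
  show "{x, y} \<in> edges G \<longleftrightarrow> {f x, f y} \<in> edges (gmap f G)"
  proof
    assume "{x, y} \<in> edges G"
    then have "f ` {x, y} \<in> (\<lambda>e. f ` e) ` edges G"
      by (rule imageI)
    then show "{f x, f y} \<in> edges (gmap f G)"
      by simp
  next
    assume "{f x, f y} \<in> edges (gmap f G)"
    then obtain e where e: "e \<in> edges G" "{f x, f y} = f ` e" by auto
    have "{x, y} \<subseteq> verts G" using xy by simp
    from inj_on_image_eq_iff[OF i this wf_graph_edge_subset[OF w e(1)]] e(2)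
    have "{x, y} = e" by simp
    with e(1) show "{x, y} \<in> edges G" by simp
  qed
qed

lemma count_sub_le_gmap:
  assumes i: "inj_on f (verts G)" and w: "wf_graph G"
  shows "count_sub F G \<le> count_sub F (gmap f G)"
proof -
  let ?C = "\<lambda>G. {S. subgraph S G \<and> iso S F}"
  have into: "gmap f ` ?C G \<subseteq> ?C (gmap f G)"
  proof
    fix T assume "T \<in> gmap f ` ?C G"
    then obtain S where T: "T = gmap f S" and s: "subgraph S G" and iso: "iso S F" by blast
    have iS: "inj_on f (verts S)"
      using i subgraphD(2)[OF s] by (rule inj_on_subset)
    show "T \<in> ?C (gmap f G)"
      using T s wf_graph_gmap[OF iS] iso_trans[OF iso_sym[OF iso_gmap[OF iS]] iso]
      by (auto simp: subgraph_def)
  qed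
  have "inj_on (gmap f) (?C G)"
  proof (rule inj_onI)
    fix S S' assume "S \<in> ?C G" "S' \<in> ?C G" and eq: "gmap f S = gmap f S'"
    then have s: "subgraph S G" "subgraph S' G" by auto
    have "f ` verts S = f ` verts S'"
      using arg_cong[OF eq, of verts] by simp
    then have "verts S = verts S'"
      by (simp only: inj_on_image_eq_iff[OF i subgraphD(2)[OF s(1)] subgraphD(2)[OF s(2)]])
    have "edges G \<subseteq> Pow (verts G)"
      using wf_graph_edge_subset[OF w] by blast
    then have pow: "edges S \<subseteq> Pow (verts G)" "edges S' \<subseteq> Pow (verts G)"
      using subgraphD(3)[OF s(1)] subgraphD(3)[OF s(2)] by blast+
    have "(\<lambda>e. f ` e) ` edges S = (\<lambda>e. f ` e) ` edges S'"
      using arg_cong[OF eq, of edges] by simp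
    then have "edges S = edges S'"
      by (simp only: inj_on_image_eq_iff[OF inj_on_image_Pow[OF i] pow])
    with \<open>verts S = verts S'\<close> show "S = S'" by (rule graph_eqI)
  qed
  from card_inj_on_le[OF this into finite_copies[OF wf_graph_gmap[OF i w]]]
  show ?thesis
    unfolding count_sub_def .
qed

lemma gmap_inv_into_gmap:
  assumes i: "inj_on f (verts G)" and w: "wf_graph G"
  shows "gmap (inv_into (verts G) f) (gmap f G) = G"
proof (rule graph_eqI)
  show "verts (gmap (inv_into (verts G) f) (gmap f G)) = verts G"
    using inv_into_image_cancel[OF i subset_refl] by simp
  have "inv_into (verts G) f ` f ` e = e" if "e \<in> edges G" for e
    using inv_into_image_cancel[OF i wf_graph_edge_subset[OF w that]] .
  then show "edges (gmap (inv_into (verts G) f) (gmap f G)) = edges G"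
    by (simp add: image_image)
qed

lemma count_sub_gmap:
  assumes i: "inj_on f (verts G)" and w: "wf_graph G"
  shows "count_sub F (gmap f G) = count_sub F G"
proof (rule antisym)
  have "inj_on (inv_into (verts G) f) (verts (gmap f G))"
    by (simp add: inj_on_inv_into)
  from count_sub_le_gmap[OF this wf_graph_gmap[OF i w]]
  show "count_sub F (gmap f G) \<le> count_sub F G"
    unfolding gmap_inv_into_gmap[OF i w] .
qed (rule count_sub_le_gmap[OF i w])

lemma wf_graph_gmap_Pair: "wf_graph G \<Longrightarrow> wf_graph (gmap (Pair k) G)"
  by (rule wf_graph_gmap) (simp_all add: inj_on_def)

lemma count_sub_gmap_Pair: "wf_graph G \<Longrightarrow> count_sub F (gmap (Pair k) G) = count_sub F G"
  by (rule count_sub_gmap) (simp_all add: inj_on_def)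

lemma count_sub_pos_embedding:
  assumes "count_sub F G \<noteq> 0"
  obtains g where "inj_on g (verts F)" "g ` verts F \<subseteq> verts G"
    "\<And>x y. x \<in> verts F \<Longrightarrow> y \<in> verts F \<Longrightarrow> {x, y} \<in> edges F \<Longrightarrow> {g x, g y} \<in> edges G"
proof -
  have "{S. subgraph S G \<and> iso S F} \<noteq> {}"
    using assms unfolding count_sub_def by (metis card.empty)
  then obtain S where S: "subgraph S G" "iso S F" by blast
  obtain g where "bij_betw g (verts F) (verts S)"
    and "\<forall>x\<in>verts F. \<forall>y\<in>verts F. {x, y} \<in> edges F \<longleftrightarrow> {g x, g y} \<in> edges S"
    using iso_sym[OF S(2)] unfolding iso_def by blast
  with subgraphD[OF S(1)] show thesis
    by (intro that[of g]) (auto simp: bij_betw_def)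
qed

lemma count_sub_eq_0_if_card_less:
  assumes "finite (verts G)" "card (verts G) < card (verts F)"
  shows "count_sub F G = 0"
proof (rule ccontr)
  assume "count_sub F G \<noteq> 0"
  then obtain g where "inj_on g (verts F)" "g ` verts F \<subseteq> verts G"
    by (rule count_sub_pos_embedding)
  from card_inj_on_le[OF this assms(1)] assms(2) show False by simp
qed

lemma count_sub_le_ex_u:
  fixes G :: "'a::countable graph"
  assumes "wf_graph G" "kcount u G = p" "\<forall>F0\<in>\<F>. count_sub F0 G = 0"
  shows "enat (count_sub H G) \<le> ex_u u p H \<F>"
proof -
  let ?G = "gmap to_nat G"
  note count_eq = count_sub_gmap[OF inj_on_to_nat assms(1)]
  have "wf_graph ?G"
    using assms(1) by (simp add: wf_graph_gmap)
  then show ?thesis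
    using assms unfolding ex_u_def kcount_def
    by (intro Sup_upper CollectI exI[of _ ?G]) (simp add: count_eq)
qed

definition has_dominating_vertex :: "'a graph \<Rightarrow> bool" where
  "has_dominating_vertex G \<longleftrightarrow> (\<exists>c\<in>verts G. \<forall>v\<in>verts G. v \<noteq> c \<longrightarrow> {c, v} \<in> edges G)"

lemma has_dominating_vertex_iso:
  assumes "iso S F" "has_dominating_vertex F"
  shows "has_dominating_vertex S"
proof -
  obtain f where f: "bij_betw f (verts S) (verts F)"
    and fe: "\<forall>x\<in>verts S. \<forall>y\<in>verts S. {x, y} \<in> edges S \<longleftrightarrow> {f x, f y} \<in> edges F"
    using assms(1) unfolding iso_def by blast
  obtain c where c: "c \<in> verts F" "\<forall>v\<in>verts F. v \<noteq> c \<longrightarrow> {c, v} \<in> edges F"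
    using assms(2) unfolding has_dominating_vertex_def by blast
  define c' where "c' = inv_into (verts S) f c"
  have c': "c' \<in> verts S" "f c' = c"
    using f c(1) unfolding c'_def by (auto simp: bij_betw_def inv_into_into f_inv_into_f)
  have "{c', v} \<in> edges S" if v: "v \<in> verts S" "v \<noteq> c'" for v
  proof -
    have "f v \<noteq> c"
      using inj_on_contraD[OF bij_betw_imp_inj_on[OF f] v(2) v(1) c'(1)] c'(2) by simp
    moreover have "f v \<in> verts F"
      using bij_betwE[OF f] v(1) by blast
    ultimately have "{f c', f v} \<in> edges F"
      using c(2) c'(2) by simp
    then show ?thesis
      using fe c'(1) v(1) by blast
  qed
  with c'(1) show ?thesis
    unfolding has_dominating_vertex_def by blast
qed

definition gunion :: "'i set \<Rightarrow> ('i \<Rightarrow> 'a graph) \<Rightarrow> 'a graph" where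
  "gunion I G = (\<Union>k\<in>I. verts (G k), \<Union>k\<in>I. edges (G k))"

lemma verts_gunion [simp]: "verts (gunion I G) = (\<Union>k\<in>I. verts (G k))"
  by (simp add: gunion_def)

lemma edges_gunion [simp]: "edges (gunion I G) = (\<Union>k\<in>I. edges (G k))"
  by (simp add: gunion_def)

lemma wf_graph_gunion:
  assumes "finite I" "\<And>k. k \<in> I \<Longrightarrow> wf_graph (G k)"
  shows "wf_graph (gunion I G)"
  unfolding wf_graph_def
proof (intro conjI ballI)
  show "finite (verts (gunion I G))"
    using assms by (simp add: wf_graph_finite_verts)
  fix e assume "e \<in> edges (gunion I G)"
  then obtain k where k: "k \<in> I" "e \<in> edges (G k)" by auto
  obtain x y where "x \<noteq> y" "e = {x, y}" "x \<in> verts (G k)" "y \<in> verts (G k)"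
    using wf_graph_edgeE[OF assms(2)[OF k(1)] k(2)] .
  with k(1) show "\<exists>x y. x \<noteq> y \<and> e = {x, y} \<and> x \<in> verts (gunion I G) \<and> y \<in> verts (gunion I G)"
    by auto
qed

lemma subgraph_gunion_component:
  assumes w: "\<And>k. k \<in> I \<Longrightarrow> wf_graph (G k)"
    and d: "disjoint_family_on (\<lambda>k. verts (G k)) I"
    and s: "subgraph S (gunion I G)" and "has_dominating_vertex S"
  obtains k where "k \<in> I" "subgraph S (G k)"
proof -
  have same: "j = k" if "j \<in> I" "k \<in> I" "x \<in> verts (G j)" "x \<in> verts (G k)" for j k x
    using d that unfolding disjoint_family_on_def by blast
  have edge_in: "e \<subseteq> verts (G j)" if "j \<in> I" "e \<in> edges (G j)" for j e
    using wf_graph_edge_subset[OF w[OF that(1)] that(2)] .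
  obtain c where c: "c \<in> verts S" "\<forall>v\<in>verts S. v \<noteq> c \<longrightarrow> {c, v} \<in> edges S"
    using \<open>has_dominating_vertex S\<close> unfolding has_dominating_vertex_def by blast
  obtain k where k: "k \<in> I" "c \<in> verts (G k)"
    using c(1) subgraphD(2)[OF s] by auto
  have vk: "verts S \<subseteq> verts (G k)"
  proof
    fix v assume v: "v \<in> verts S"
    show "v \<in> verts (G k)"
    proof (cases "v = c")
      case False
      then have "{c, v} \<in> edges S"
        using c(2) v by blast
      then obtain j where j: "j \<in> I" "{c, v} \<in> edges (G j)"
        using subgraphD(3)[OF s] by auto
      then have "{c, v} \<subseteq> verts (G j)"
        by (rule edge_in)
      with same[OF j(1) k(1) _ k(2)] show ?thesis by blast
    qed (use k in simp)
  qed
  have "edges S \<subseteq> edges (G k)"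
  proof
    fix e assume e: "e \<in> edges S"
    obtain x y where xy: "e = {x, y}" "x \<in> verts S"
      using wf_graph_edgeE[OF subgraphD(1)[OF s] e] by metis
    obtain j where j: "j \<in> I" "e \<in> edges (G j)"
      using e subgraphD(3)[OF s] by auto
    have "x \<in> verts (G j)" "x \<in> verts (G k)"
      using edge_in[OF j] xy vk by auto
    then have "j = k"
      by (rule same[OF j(1) k(1)])
    with j show "e \<in> edges (G k)" by simp
  qed
  with k(1) vk subgraphD(1)[OF s] show thesis
    by (intro that[of k]) (auto simp: subgraph_def)
qed

lemma count_sub_gunion:
  assumes fI: "finite I" and w: "\<And>k. k \<in> I \<Longrightarrow> wf_graph (G k)"
    and d: "disjoint_family_on (\<lambda>k. verts (G k)) I"
    and F: "has_dominating_vertex F"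
  shows "count_sub F (gunion I G) = (\<Sum>k\<in>I. count_sub F (G k))"
proof -
  let ?C = "\<lambda>G. {S. subgraph S G \<and> iso S F}"
  have "?C (gunion I G) = (\<Union>k\<in>I. ?C (G k))"
  proof (intro equalityI subsetI)
    fix S assume "S \<in> ?C (gunion I G)"
    with subgraph_gunion_component[OF w d] has_dominating_vertex_iso[OF _ F]
    show "S \<in> (\<Union>k\<in>I. ?C (G k))" by blast
  next
    fix S assume "S \<in> (\<Union>k\<in>I. ?C (G k))"
    then obtain k where "k \<in> I" "subgraph S (G k)" "iso S F" by blast
    then show "S \<in> ?C (gunion I G)"
      using subgraph_trans_host[of S "G k" "gunion I G"] by auto
  qed
  moreover have "?C (G i) \<inter> ?C (G j) = {}" if "i \<in> I" "j \<in> I" "i \<noteq> j" for i j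
  proof -
    have "verts (G i) \<inter> verts (G j) = {}"
      using d that unfolding disjoint_family_on_def by blast
    then have "verts S = {}" if "S \<in> ?C (G i) \<inter> ?C (G j)" for S
      using that subgraphD(2) by blast
    moreover have "verts S \<noteq> {}" if "iso S F" for S
      using has_dominating_vertex_iso[OF that F] unfolding has_dominating_vertex_def by blast
    ultimately show ?thesis by blast
  qed
  ultimately show ?thesis
    unfolding count_sub_def using w by (simp add: card_UN_disjoint[OF fI] finite_copies)
qed

lemma wf_graph_complete_graph: "wf_graph (complete_graph n)"
  unfolding complete_graph_def by (rule wf_graph_intro) auto

lemma wf_graph_turan_graph: "wf_graph (turan_graph r n)"
  unfolding turan_graph_def by (rule wf_graph_intro) auto

lemma verts_complete_graph [simp]: "verts (complete_graph n) = {0..<n}"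
  by (simp add: complete_graph_def)

lemma verts_turan_graph [simp]: "verts (turan_graph r n) = {0..<n}"
  by (simp add: turan_graph_def)

lemma verts_split_graph [simp]: "verts (split_graph u d) = {0..<u + d + 1}"
  by (simp add: split_graph_def)

lemma complete_graph_edge_iff:
  "{x, y} \<in> edges (complete_graph n) \<longleftrightarrow> x < n \<and> y < n \<and> x \<noteq> y"
  unfolding complete_graph_def by (auto simp: doubleton_eq_iff)

lemma turan_graph_edge_mod_neq:
  "{x, y} \<in> edges (turan_graph r n) \<Longrightarrow> x mod r \<noteq> y mod r"
  unfolding turan_graph_def by (auto simp: doubleton_eq_iff)

lemma split_graph_edgeI:
  "x < u + d + 1 \<Longrightarrow> y < u + d + 1 \<Longrightarrow> x \<noteq> y \<Longrightarrow> x < u \<or> y < u \<Longrightarrow>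
    {x, y} \<in> edges (split_graph u d)"
  unfolding split_graph_def by auto

lemma has_dominating_vertex_complete_graph:
  "m \<ge> 1 \<Longrightarrow> has_dominating_vertex (complete_graph m)"
  unfolding has_dominating_vertex_def by (intro bexI[of _ 0]) (auto simp: complete_graph_edge_iff)

lemma has_dominating_vertex_split_graph:
  "u \<ge> 1 \<Longrightarrow> has_dominating_vertex (split_graph u d)"
  unfolding has_dominating_vertex_def by (auto intro!: bexI[of _ 0] split_graph_edgeI)

lemma kcount_complete_graph_self: "kcount u (complete_graph u) = 1"
proof -
  let ?K = "complete_graph u"
  have "S = ?K" if s: "subgraph S ?K" and iso: "iso S ?K" for S
  proof (rule graph_eqI)
    obtain f where f: "bij_betw f (verts S) {0..<u}"
      and fe: "\<forall>x\<in>verts S. \<forall>y\<in>verts S. {x, y} \<in> edges S \<longleftrightarrow> {f x, f y} \<in> edges ?K"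
      using iso unfolding iso_def by auto
    have "card (verts S) = card {0..<u}"
      using bij_betw_same_card[OF f] .
    then show vS: "verts S = verts ?K"
      using card_subset_eq[OF _ subgraphD(2)[OF s]] by simp
    have "e \<in> edges S" if "e \<in> edges ?K" for e
    proof -
      obtain i j where ij: "e = {i, j}" "i < u" "j < u" "i \<noteq> j"
        using \<open>e \<in> edges ?K\<close> unfolding complete_graph_def by auto
      have "f i \<noteq> f j" "f i < u" "f j < u"
        using ij vS inj_on_contraD[OF bij_betw_imp_inj_on[OF f]] bij_betwE[OF f] by auto
      then show ?thesis
        using fe ij vS by (simp add: complete_graph_edge_iff)
    qed
    with subgraphD(3)[OF s] show "edges S = edges ?K" by blast
  qed
  moreover have "subgraph ?K ?K"
    by (simp add: subgraph_def wf_graph_complete_graph)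
  ultimately have "{S. subgraph S ?K \<and> iso S ?K} = {?K}"
    using iso_refl by blast
  then show ?thesis
    unfolding kcount_def count_sub_def by simp
qed

lemma turan_graph_clique_free:
  assumes "\<omega> \<ge> 1"
  shows "count_sub (complete_graph (\<omega> + 1)) (turan_graph \<omega> n) = 0"
proof (rule ccontr)
  assume "count_sub (complete_graph (\<omega> + 1)) (turan_graph \<omega> n) \<noteq> 0"
  then obtain g where g: "inj_on g {0..<\<omega> + 1}"
    "\<And>x y. x < \<omega> + 1 \<Longrightarrow> y < \<omega> + 1 \<Longrightarrow> {x, y} \<in> edges (complete_graph (\<omega> + 1)) \<Longrightarrow>
      {g x, g y} \<in> edges (turan_graph \<omega> n)"
    by (rule count_sub_pos_embedding) auto
  have "inj_on (\<lambda>i. g i mod \<omega>) {0..<\<omega> + 1}"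
  proof (rule inj_onI, rule ccontr)
    fix i j assume "i \<in> {0..<\<omega> + 1}" "j \<in> {0..<\<omega> + 1}" "i \<noteq> j"
    then have "{g i, g j} \<in> edges (turan_graph \<omega> n)"
      using g(2) by (simp add: complete_graph_edge_iff)
    then show "g i mod \<omega> = g j mod \<omega> \<Longrightarrow> False"
      using turan_graph_edge_mod_neq by blast
  qed
  moreover have "(\<lambda>i. g i mod \<omega>) ` {0..<\<omega> + 1} \<subseteq> {0..<\<omega>}"
    using assms by auto
  ultimately have "card {0..<\<omega> + 1} \<le> card {0..<\<omega>}"
    by (rule card_inj_on_le) simp
  then show False by simp
qed

lemma card_mod_in_ge:
  fixes m n :: nat
  assumes "R \<subseteq> {..<m}"
  shows "card R * (n div m) \<le> card {x. x < n \<and> x mod m \<in> R}"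
proof -
  let ?h = "\<lambda>(r, j). r + m * j"
  have "inj_on ?h (R \<times> {..<n div m})"
  proof (rule inj_onI, clarsimp)
    fix r j r' j' assume rr': "r \<in> R" "r' \<in> R" and eq: "r + m * j = r' + m * j'"
    have "r < m" "r' < m" using rr' assms by auto
    then show "r = r' \<and> j = j'"
      using arg_cong[OF eq, of "\<lambda>x. x mod m"] arg_cong[OF eq, of "\<lambda>x. x div m"] by simp
  qed
  moreover have "?h ` (R \<times> {..<n div m}) \<subseteq> {x. x < n \<and> x mod m \<in> R}"
  proof
    fix z assume "z \<in> ?h ` (R \<times> {..<n div m})"
    then obtain r j where z: "z = r + m * j" "r \<in> R" "j < n div m" by auto
    then have "r < m" using assms by auto
    moreover have "m * (j + 1) \<le> n"
      using z(3) \<open>r < m\<close> less_eq_div_iff_mult_less_eq[of m "j + 1" n]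
      by (simp add: mult.commute)
    ultimately show "z \<in> {x. x < n \<and> x mod m \<in> R}"
      using z by simp
  qed
  ultimately have "card (R \<times> {..<n div m}) \<le> card {x. x < n \<and> x mod m \<in> R}"
    by (rule card_inj_on_le) simp
  then show ?thesis
    by (simp add: card_cartesian_product)
qed

lemma card_mod_notin_le:
  fixes u \<Delta> \<omega> :: nat
  assumes "u < \<omega>" "R \<subseteq> {..<\<omega>}" "card R = u"
  shows "card {x. x < \<Delta> + u * (\<Delta> div (\<omega> - u)) \<and> x mod \<omega> \<notin> R} \<le> \<Delta>"
proof -
  define q where "q = \<Delta> div (\<omega> - u)"
  define n where "n = \<Delta> + u * q"
  define In where "In = {x. x < n \<and> x mod \<omega> \<in> R}"
  define Out where "Out = {x. x < n \<and> x mod \<omega> \<notin> R}"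
  have "\<omega> * q \<le> n"
    using times_div_less_eq_dividend[of "\<omega> - u" \<Delta>] assms(1)
    unfolding n_def q_def by (simp add: diff_mult_distrib)
  then have "u * q \<le> u * (n div \<omega>)"
    using assms(1) by (simp add: less_eq_div_iff_mult_less_eq mult.commute)
  also have "\<dots> \<le> card In"
    using card_mod_in_ge[OF assms(2), of n] assms(3) unfolding In_def by simp
  finally have "u * q \<le> card In" .
  moreover have "In \<union> Out = {..<n}" "In \<inter> Out = {}" "finite In" "finite Out"
    unfolding In_def Out_def by auto
  then have "card In + card Out = n"
    using card_Un_disjoint[of In Out] by simp
  ultimately show ?thesis
    unfolding Out_def n_def q_def by linarith
qed

lemma turan_graph_split_free:
  fixes u \<Delta> \<omega> :: nat
  assumes "u < \<omega>"
  shows "count_sub (split_graph u \<Delta>) (turan_graph \<omega> (\<Delta> + u * (\<Delta> div (\<omega> - u)))) = 0"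
proof (rule ccontr)
  define n where "n = \<Delta> + u * (\<Delta> div (\<omega> - u))"
  assume "count_sub (split_graph u \<Delta>) (turan_graph \<omega> (\<Delta> + u * (\<Delta> div (\<omega> - u)))) \<noteq> 0"
  then obtain g where g: "inj_on g {0..<u + \<Delta> + 1}" "g ` {0..<u + \<Delta> + 1} \<subseteq> {0..<n}"
    "\<And>x y. x < u + \<Delta> + 1 \<Longrightarrow> y < u + \<Delta> + 1 \<Longrightarrow> {x, y} \<in> edges (split_graph u \<Delta>) \<Longrightarrow>
      {g x, g y} \<in> edges (turan_graph \<omega> n)"
    unfolding n_def by (rule count_sub_pos_embedding) auto
  have adj: "g i mod \<omega> \<noteq> g j mod \<omega>" if "i < u" "j < u + \<Delta> + 1" "i \<noteq> j" for i j
  proof -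
    have "{g i, g j} \<in> edges (turan_graph \<omega> n)"
      using that by (intro g(3) split_graph_edgeI) auto
    then show ?thesis
      by (rule turan_graph_edge_mod_neq)
  qed
  define R where "R = (\<lambda>i. g i mod \<omega>) ` {..<u}"
  define Out where "Out = {x. x < n \<and> x mod \<omega> \<notin> R}"
  have "inj_on (\<lambda>i. g i mod \<omega>) {..<u}"
  proof (rule inj_onI, rule ccontr)
    fix i j assume "i \<in> {..<u}" "j \<in> {..<u}" "g i mod \<omega> = g j mod \<omega>" "i \<noteq> j"
    with adj[of i j] show False by simp
  qed
  then have "card R = u"
    unfolding R_def by (simp add: card_image)
  moreover have "R \<subseteq> {..<\<omega>}"
    unfolding R_def using assms by auto
  ultimately have "card Out \<le> \<Delta>"
    unfolding Out_def n_def by (intro card_mod_notin_le assms)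
  have "g ` {u..<u + \<Delta> + 1} \<subseteq> Out"
  proof
    fix x assume "x \<in> g ` {u..<u + \<Delta> + 1}"
    then obtain j where j: "u \<le> j" "j < u + \<Delta> + 1" "x = g j" by auto
    then have "x mod \<omega> \<noteq> g i mod \<omega>" if "i < u" for i
      using adj[of i j] that by auto
    moreover have "x < n"
      using g(2) j unfolding image_subset_iff by simp
    ultimately show "x \<in> Out"
      unfolding Out_def R_def by auto
  qed
  then have "card (g ` {u..<u + \<Delta> + 1}) \<le> card Out"
    by (rule card_mono[rotated]) (simp add: Out_def)
  moreover have "card (g ` {u..<u + \<Delta> + 1}) = \<Delta> + 1"
    using inj_on_subset[OF g(1)] by (simp add: card_image)
  ultimately show False
    using \<open>card Out \<le> \<Delta>\<close> by simp
qed

definition copies_padded :: "nat \<Rightarrow> 'a graph \<Rightarrow> nat \<Rightarrow> 'a graph \<Rightarrow> (nat \<times> 'a) graph" where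
  "copies_padded a L r K = gunion {..<a + r} (\<lambda>k. gmap (Pair k) (if k < a then L else K))"

lemma wf_graph_copies_padded:
  assumes "wf_graph L" "wf_graph K"
  shows "wf_graph (copies_padded a L r K)"
  unfolding copies_padded_def
  by (intro wf_graph_gunion wf_graph_gmap_Pair) (use assms in auto)

lemma count_sub_copies_padded:
  assumes "has_dominating_vertex F" "wf_graph L" "wf_graph K"
  shows "count_sub F (copies_padded a L r K) = a * count_sub F L + r * count_sub F K"
proof -
  let ?G = "\<lambda>k. if k < a then L else K"
  have "count_sub F (copies_padded a L r K) = (\<Sum>k<a + r. count_sub F (gmap (Pair k) (?G k)))"
    unfolding copies_padded_def using assms
    by (intro count_sub_gunion) (auto simp: wf_graph_gmap_Pair disjoint_family_on_def)
  also have "\<dots> = (\<Sum>k<a + r. if k < a then count_sub F L else count_sub F K)"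
    using assms(2,3) by (intro sum.cong) (simp_all add: count_sub_gmap_Pair)
  also have "\<dots> = a * count_sub F L + r * count_sub F K"
    by (induction r) auto
  finally show ?thesis .
qed

lemma count_sub_copies_le_copies_padded:
  assumes "wf_graph L" "wf_graph K"
  shows "count_sub H (copies a L) \<le> count_sub H (copies_padded a L r K)"
proof (rule count_sub_mono)
  show "wf_graph (copies_padded a L r K)"
    using assms by (rule wf_graph_copies_padded)
  show "verts (copies a L) \<subseteq> verts (copies_padded a L r K)"
  proof
    fix z assume "z \<in> verts (copies a L)"
    then obtain k x where "z = (k, x)" "k < a" "x \<in> verts L"
      by (auto simp: copies_def)
    then show "z \<in> verts (copies_padded a L r K)"
      by (auto simp: copies_padded_def intro!: bexI[of _ k])
  qed
  show "edges (copies a L) \<subseteq> edges (copies_padded a L r K)"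
  proof
    fix e assume "e \<in> edges (copies a L)"
    then obtain k x y where "e = Pair k ` {x, y}" "k < a" "{x, y} \<in> edges L"
      by (auto simp: copies_def)
    then show "e \<in> edges (copies_padded a L r K)"
      by (auto simp: copies_padded_def intro!: bexI[of _ k] imageI)
  qed
qed

theorem mainTheorem9:
  fixes \<Delta> \<omega> u p :: nat and H :: "'b graph"
  assumes "\<Delta> \<ge> \<omega>" and "\<omega> \<ge> u + 1" and "u + 1 \<ge> 2" and "p \<ge> 1"
    and "wf_graph H" and "kcount u H \<ge> 1"
  shows "let L = turan_graph \<omega> (\<Delta> + u * (\<Delta> div (\<omega> - u)))
         in enat (count_sub H (copies (p div kcount u L) L))
            \<le> ex_u u p H {split_graph u \<Delta>, complete_graph (\<omega> + 1)}"
proof -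
  define L where "L = turan_graph \<omega> (\<Delta> + u * (\<Delta> div (\<omega> - u)))"
  define a where "a = p div kcount u L"
  define G where "G = copies_padded a L (p mod kcount u L) (complete_graph u)"
  have "\<omega> \<ge> 1"
    using assms(2) by simp
  have wf: "wf_graph L" "wf_graph (complete_graph u)"
    unfolding L_def by (simp_all add: wf_graph_turan_graph wf_graph_complete_graph)
  have "kcount u G = p"
    using count_sub_copies_padded[OF has_dominating_vertex_complete_graph wf] assms(3)
    unfolding kcount_def G_def a_def
    by (simp add: kcount_complete_graph_self[unfolded kcount_def] div_mult_mod_eq)
  moreover have "count_sub (split_graph u \<Delta>) G = 0"
    using assms(2,3) unfolding G_def L_def
    by (simp add: count_sub_copies_padded[OF _ wf[unfolded L_def]] has_dominating_vertex_split_graph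
        turan_graph_split_free count_sub_eq_0_if_card_less)
  moreover have "count_sub (complete_graph (\<omega> + 1)) G = 0"
    using assms(2) turan_graph_clique_free[OF \<open>\<omega> \<ge> 1\<close>] unfolding G_def L_def
    by (simp add: count_sub_copies_padded[OF _ wf[unfolded L_def]]
        has_dominating_vertex_complete_graph count_sub_eq_0_if_card_less)
  ultimately have "enat (count_sub H G) \<le> ex_u u p H {split_graph u \<Delta>, complete_graph (\<omega> + 1)}"
    using wf by (intro count_sub_le_ex_u) (simp_all add: G_def wf_graph_copies_padded)
  moreover have "count_sub H (copies a L) \<le> count_sub H G"
    unfolding G_def using wf by (rule count_sub_copies_le_copies_padded)
  ultimately show ?thesis
    unfolding Let_def L_def a_def by (meson enat_ord_simps(1) order_trans)
qed

end
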